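(* Let $v_1,\dots,v_N\in S^{n-1}$ ($N\ge 2$) be in general position in dimension $n$. There exists a constant $c_0>0$ depending only on $n$ and $v_1,\dots,v_N$ such that the following holds: for any $1\le i_1<i_2\le N$, any $R>0$, and any two $(n-1)$-dimensional Euclidean balls $B_1^{n-1},B_2^{n-1}$ of radius $R$ with $B_1^{n-1}$ lying in a hyperplane orthogonal to $v_{i_1}$ and $B_2^{n-1}$ lying in a hyperplane orthogonal to $v_{i_2}$, the set $K=\mathrm{conv}\{B_1^{n-1},B_2^{n-1}\}$ contains a ball $B(x_0,c_0R)$ for some $x_0\in\mathrm{int}\,K$.
   Context: Unit vectors $v_1,\dots,v_N\in\mathbb R^n$ are in general position in dimension $n$ if any $n$ of them are linearly independent (in particular no two are parallel). $B(x,r)$ denotes the closed Euclidean ball in $\mathbb R^n$ with center $x$ and radius $r$. *)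

theory Defs
  imports "HOL-Analysis.Analysis"
begin

definition general_position :: "(nat \<Rightarrow> 'a::euclidean_space) \<Rightarrow> nat \<Rightarrow> bool" where
  "general_position v N \<longleftrightarrow>
     (\<forall>I. I \<subseteq> {1..N} \<and> card I \<le> DIM('a) \<longrightarrow> inj_on v I \<and> independent (v ` I)) \<and>
     (\<forall>i\<in>{1..N}. \<forall>j\<in>{1..N}. i \<noteq> j \<longrightarrow> independent {v i, v j} \<and> v i \<noteq> v j)"

definition hyperplane_ball :: "'a::euclidean_space \<Rightarrow> 'a \<Rightarrow> real \<Rightarrow> 'a set" where
  "hyperplane_ball w c R = {x \<in> cball c R. w \<bullet> (x - c) = 0}"

end

theory Submission
  imports Defs
begin

(* If u and w are unit vectors with d = 1 - (u . w)^2 > 0, every vector z splits as z = a + b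
   with a orthogonal to u and b orthogonal to w, both parts of length at most 2 |z| / d. Hence
   every point of a ball of radius d R / 4 around the midpoint of c1 and c2 is the midpoint of
   a point of the disc of radius R through c1 orthogonal to u and a point of the disc through c2
   orthogonal to w. General position keeps d away from 0, uniformly over the finitely many
   pairs of directions. *)

lemma inner_square_less_one_if_independent:
  fixes u w :: "'a::real_inner"
  assumes "norm u = 1" "norm w = 1" "independent {u, w}" "u \<noteq> w"
  shows "(u \<bullet> w)\<^sup>2 < 1"
proof -
  have "\<bar>u \<bullet> w\<bar> \<le> 1"
    using Cauchy_Schwarz_ineq2[of u w] assms(1,2) by simp
  moreover have "\<bar>u \<bullet> w\<bar> \<noteq> 1"
  proof
    assume "\<bar>u \<bullet> w\<bar> = 1"
    then have "u = - w"
      using norm_cauchy_schwarz_abs_eq[of u w] assms(1,2,4) by auto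
    then have "u \<in> span {w}"
      by (simp add: span_base span_neg)
    then show False
      using assms(3,4) by (simp add: independent_insert)
  qed
  ultimately have "\<bar>u \<bullet> w\<bar> < 1" by simp
  then show ?thesis
    by (simp add: abs_square_less_1)
qed

lemma split_orthogonal_to_two_unit_vectors:
  fixes u w z :: "'a::real_inner"
  assumes u: "norm u = 1" and w: "norm w = 1"
    and d: "d = 1 - (u \<bullet> w)\<^sup>2" "d > 0"
  obtains a b where "z = a + b" "u \<bullet> a = 0" "w \<bullet> b = 0"
    "norm a \<le> 2 * norm z / d" "norm b \<le> norm z / d"
proof
  \<comment> \<open>b is orthogonal to w and has the same u-component as z, so z - b is orthogonal to u.\<close>
  define e where "e = u - (u \<bullet> w) *\<^sub>R w"
  define b where "b = ((z \<bullet> u) / d) *\<^sub>R e"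
  have uu: "u \<bullet> u = 1" and ww: "w \<bullet> w = 1"
    using u w by (simp_all add: dot_square_norm)
  have eu: "u \<bullet> e = d" and ew: "w \<bullet> e = 0" and ee: "e \<bullet> e = d"
    by (simp_all add: e_def d inner_diff_right inner_diff_left uu ww inner_commute power2_eq_square)
  have "(norm e)\<^sup>2 \<le> 1"
    using ee d by (simp add: power2_norm_eq_inner)
  then have ne: "norm e \<le> 1"
    by (simp add: power_le_one_iff)
  have "\<bar>z \<bullet> u\<bar> \<le> norm z"
    using Cauchy_Schwarz_ineq2[of z u] u by simp
  then have "\<bar>z \<bullet> u\<bar> * norm e \<le> norm z"
    using ne by (meson abs_ge_zero mult_left_le order_trans)
  then show nb: "norm b \<le> norm z / d"
    using d by (simp add: b_def divide_right_mono)
  show "z = (z - b) + b" by simp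
  have "u \<bullet> b = z \<bullet> u"
    using d by (simp add: b_def eu)
  then show "u \<bullet> (z - b) = 0"
    by (simp add: inner_diff_right inner_commute)
  show "w \<bullet> b = 0"
    by (simp add: b_def ew)
  have "norm z \<le> norm z / d"
    using d by (simp add: le_divide_eq mult_left_le)
  then show "norm (z - b) \<le> 2 * norm z / d"
    using nb norm_triangle_ineq4[of z b] by simp
qed

lemma midpoint_in_convex_hull_Un:
  assumes "p \<in> A" "q \<in> B"
  shows "midpoint p q \<in> convex hull (A \<union> B)"
proof -
  have "closed_segment p q \<subseteq> convex hull (A \<union> B)"
    using assms by (intro closed_segment_subset_convex_hull) (auto intro: hull_inc)
  then show ?thesis
    using midpoint_in_closed_segment by blast
qed

lemma cball_midpoint_subset_convex_hull_hyperplane_balls: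
  fixes u w c1 c2 :: "'a::euclidean_space"
  assumes u: "norm u = 1" and w: "norm w = 1"
    and c: "0 < c" "c \<le> (1 - (u \<bullet> w)\<^sup>2) / 4" and R: "0 \<le> R"
  shows "cball (midpoint c1 c2) (c * R) \<subseteq>
     convex hull (hyperplane_ball u c1 R \<union> hyperplane_ball w c2 R)"
proof
  fix x assume x: "x \<in> cball (midpoint c1 c2) (c * R)"
  define d where "d = 1 - (u \<bullet> w)\<^sup>2"
  define z where "z = 2 *\<^sub>R (x - midpoint c1 c2)"
  have d0: "d > 0" using c by (simp add: d_def)
  obtain a b where z: "z = a + b" and ab: "u \<bullet> a = 0" "w \<bullet> b = 0"
    and na: "norm a \<le> 2 * norm z / d" and nb: "norm b \<le> norm z / d"
    using split_orthogonal_to_two_unit_vectors[OF u w d_def d0] by blast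
  have "2 * norm z \<le> d * R"
  proof -
    have "norm z \<le> 2 * (c * R)"
      using x by (simp add: z_def dist_norm norm_minus_commute)
    also have "\<dots> \<le> 2 * (d / 4 * R)"
      using c R by (intro mult_left_mono mult_right_mono) (simp_all add: d_def)
    finally show ?thesis by (simp add: mult.commute)
  qed
  then have "2 * norm z / d \<le> R"
    using d0 by (simp add: divide_le_eq mult.commute)
  moreover have "norm z / d \<le> 2 * norm z / d"
    using d0 by (simp add: divide_right_mono)
  ultimately have "c1 + a \<in> hyperplane_ball u c1 R" "c2 + b \<in> hyperplane_ball w c2 R"
    using ab na nb by (simp_all add: hyperplane_ball_def dist_norm)
  then have "midpoint (c1 + a) (c2 + b) \<in> convex hull (hyperplane_ball u c1 R \<union> hyperplane_ball w c2 R)"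
    by (rule midpoint_in_convex_hull_Un)
  moreover have "midpoint (c1 + a) (c2 + b) = midpoint c1 c2 + (1/2) *\<^sub>R z"
    by (simp add: z midpoint_def scaleR_add_right)
  ultimately show "x \<in> convex hull (hyperplane_ball u c1 R \<union> hyperplane_ball w c2 R)"
    by (simp add: z_def)
qed

lemma finite_positive_lower_bound:
  fixes f :: "'a \<Rightarrow> real"
  assumes "finite P" "\<And>p. p \<in> P \<Longrightarrow> 0 < f p"
  obtains c where "0 < c" "\<And>p. p \<in> P \<Longrightarrow> c \<le> f p"
proof
  show "0 < Min (insert 1 (f ` P))"
    using assms by simp
  show "Min (insert 1 (f ` P)) \<le> f p" if "p \<in> P" for p
    using assms(1) that by simp
qed

theorem lemma3p3:
  fixes v :: "nat \<Rightarrow> 'a::euclidean_space" and N :: nat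
  assumes "N \<ge> 2"
    and "\<forall>i\<in>{1..N}. norm (v i) = 1"
    and "general_position v N"
  shows "\<exists>c0>0. \<forall>i1 i2 R c1 c2.
           1 \<le> i1 \<and> i1 < i2 \<and> i2 \<le> N \<and> R > 0 \<longrightarrow>
           (\<exists>x0 \<in> interior (convex hull (hyperplane_ball (v i1) c1 R \<union> hyperplane_ball (v i2) c2 R)).
              cball x0 (c0 * R) \<subseteq> convex hull (hyperplane_ball (v i1) c1 R \<union> hyperplane_ball (v i2) c2 R))"
proof -
  define P where "P = {1..N} \<times> {1..N} - Id"
  have "finite P"
    by (simp add: P_def)
  define f where "f = (\<lambda>(i, j). (1 - (v i \<bullet> v j)\<^sup>2) / 4)"
  have "0 < f p" if "p \<in> P" for p
  proof -
    obtain i j where p: "p = (i, j)" by fastforce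
    have "(v i \<bullet> v j)\<^sup>2 < 1"
      using that assms(2,3) unfolding general_position_def P_def p
      by (intro inner_square_less_one_if_independent) auto
    then show ?thesis by (simp add: f_def p)
  qed
  with \<open>finite P\<close> obtain c0 where c0: "0 < c0" and c0_le: "\<And>p. p \<in> P \<Longrightarrow> c0 \<le> f p"
    using finite_positive_lower_bound by blast
  show ?thesis
  proof (intro exI[of _ c0] conjI c0 allI impI)
    fix i1 i2 :: nat and R :: real and c1 c2 :: 'a
    assume h: "1 \<le> i1 \<and> i1 < i2 \<and> i2 \<le> N \<and> R > 0"
    let ?K = "convex hull (hyperplane_ball (v i1) c1 R \<union> hyperplane_ball (v i2) c2 R)"
    have sub: "cball (midpoint c1 c2) (c0 * R) \<subseteq> ?K"
      using h assms(2) c0 c0_le[of "(i1, i2)"]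
      by (intro cball_midpoint_subset_convex_hull_hyperplane_balls) (auto simp: P_def f_def)
    moreover have "midpoint c1 c2 \<in> interior ?K"
      using sub c0 h mem_interior_cball by (meson mult_pos_pos)
    ultimately show "\<exists>x0 \<in> interior ?K. cball x0 (c0 * R) \<subseteq> ?K"
      by blast
  qed
qed

end
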